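(* Let $C>0$. Let $G=(V,E)$ be a graph with $n:=|V|\sim CM\log M$ (as $M\to\infty$), and let $\Phi$ be an $M\times n$ matrix with columns $\{\varphi_i\}_{i\in V}$ whose entries are drawn independently from $\mathbb{C}\mathcal{N}(0,\frac1M)$. Then for each proportion $\alpha<1-\frac{1}{2C}$ there exists a constant $C'>0$ such that, with overwhelming probability, \[ \max\Big\{\|\varepsilon\|_2,\ \sqrt{M}\,\mathrm{PUN}(\Phi;\alpha,\varepsilon)\Big\}\geq\frac{C'}{\sqrt{M}} \] for every noise vector $\varepsilon=\{\varepsilon_{ij}\}_{\{i,j\}\in E}$ of complex numbers.
   Context: $\mathbb{C}\mathcal{N}(0,\sigma^2)$ is the complex Gaussian with independent $\mathcal{N}(0,\sigma^2/2)$ real and imaginary parts. "With overwhelming probability" means with probability at least $1-c_0\mathrm{e}^{-c_1M}$ for constants $c_0,c_1>0$ independent of $M$. Algorithm 1 (pruning for reliability): given a graph $G=(V,E)$, $f:E\to\mathbb{R}$ and $\alpha\in(0,1)$, starting from $H=G$ repeat $\lfloor(1-\alpha)|V|\rfloor$ times: find an edge $\{i,j\}$ of $H$ minimizing $f$ and delete both vertices $i,j$ from $H$. Projective uniformity with noise: for $\alpha\in(0,1)$, $x\in\mathbb{C}^M$ and $\varepsilon$, let $\mathcal{J}(\alpha,x,\varepsilon)$ be the set of vertices remaining after applying Algorithm 1 with $f(i,j)=|\overline{\langle x,\varphi_i\rangle}\langle x,\varphi_j\rangle+\varepsilon_{ij}|$. Then \[ \mathrm{PUN}(\Phi;\alpha,\varepsilon)=\min_{x\in\mathbb{C}^M,\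 \|x\|=1}\ \min_{\{i,j\}\in E,\ i,j\in\mathcal{J}(\alpha,x,\varepsilon)}|\overline{\langle x,\varphi_i\rangle}\langle x,\varphi_j\rangle+\varepsilon_{ij}|. \] *)

theory Defs
  imports "HOL-Probability.Probability" "HOL-Library.Landau_Symbols"
begin

text \<open>Vectors in C^M are functions nat => complex; only coordinates k < M matter.
  An M x n matrix is a function on index pairs (row k, column i).\<close>

definition cinner :: "nat \<Rightarrow> (nat \<Rightarrow> complex) \<Rightarrow> (nat \<Rightarrow> complex) \<Rightarrow> complex" where
  "cinner M x y = (\<Sum>k<M. x k * cnj (y k))"

definition col :: "(nat \<times> nat \<Rightarrow> complex) \<Rightarrow> nat \<Rightarrow> (nat \<Rightarrow> complex)" where
  "col \<Phi> i = (\<lambda>k. \<Phi> (k, i))"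

text \<open>Edges are 2-element sets {i,j}; oriented with i = Min e < j = Max e.\<close>
definition fval :: "nat \<Rightarrow> (nat \<times> nat \<Rightarrow> complex) \<Rightarrow> (nat \<Rightarrow> complex) \<Rightarrow> (nat set \<Rightarrow> complex)
    \<Rightarrow> nat set \<Rightarrow> complex" where
  "fval M \<Phi> x \<epsilon> e = cnj (cinner M x (col \<Phi> (Min e))) * cinner M x (col \<Phi> (Max e)) + \<epsilon> e"

text \<open>One step of Algorithm 1 on the current vertex set H: delete both endpoints of an
  edge of the induced subgraph minimising f (any minimiser); if no edge remains, nothing happens.\<close>
definition prune_step :: "nat set set \<Rightarrow> (nat set \<Rightarrow> real) \<Rightarrow> nat set \<Rightarrow> nat set \<Rightarrow> bool" where
  "prune_step E f H H' \<longleftrightarrow>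
     (\<exists>e\<in>E. e \<subseteq> H \<and> (\<forall>e'\<in>E. e' \<subseteq> H \<longrightarrow> f e \<le> f e') \<and> H' = H - e)
   \<or> ((\<forall>e\<in>E. \<not> e \<subseteq> H) \<and> H' = H)"

definition pruned_sets :: "nat set \<Rightarrow> nat set set \<Rightarrow> (nat set \<Rightarrow> real) \<Rightarrow> real \<Rightarrow> nat set set" where
  "pruned_sets V E f \<alpha> = {J. (prune_step E f ^^ nat \<lfloor>(1 - \<alpha>) * real (card V)\<rfloor>) V J}"

text \<open>Projective uniformity with noise (minimum over the empty set is +infinity;
  worst case over tie-breaking in Algorithm 1).\<close>
definition PUN :: "nat \<Rightarrow> nat \<Rightarrow> nat set set \<Rightarrow> (nat \<times> nat \<Rightarrow> complex) \<Rightarrow> real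
    \<Rightarrow> (nat set \<Rightarrow> complex) \<Rightarrow> ereal" where
  "PUN M n E \<Phi> \<alpha> \<epsilon> =
    (INF x \<in> {x. (\<Sum>k<M. (cmod (x k))\<^sup>2) = 1}.
      INF J \<in> pruned_sets {..<n} E (\<lambda>e. cmod (fval M \<Phi> x \<epsilon> e)) \<alpha>.
        INF e \<in> {e\<in>E. e \<subseteq> J}. ereal (cmod (fval M \<Phi> x \<epsilon> e)))"

definition noise_norm :: "nat set set \<Rightarrow> (nat set \<Rightarrow> complex) \<Rightarrow> real" where
  "noise_norm E \<epsilon> = sqrt (\<Sum>e\<in>E. (cmod (\<epsilon> e))\<^sup>2)"

text \<open>Complex Gaussian CN(0, s2): independent real and imaginary parts N(0, s2/2).\<close>
definition CN :: "real \<Rightarrow> complex measure" where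
  "CN s2 = distr (density lborel (normal_density 0 (sqrt (s2 / 2)))
                  \<Otimes>\<^sub>M density lborel (normal_density 0 (sqrt (s2 / 2))))
             borel (\<lambda>(a, b). Complex a b)"

definition gauss_matrix :: "nat \<Rightarrow> nat \<Rightarrow> (nat \<times> nat \<Rightarrow> complex) measure" where
  "gauss_matrix M n = PiM ({..<M} \<times> {..<n}) (\<lambda>_. CN (1 / real M))"

end

(*
  For a fixed unit vector x the inner products <x, phi_i> are independent complex Gaussians of
  variance 1/M, so a column is small (|<x, phi_i>|^2 < delta/M) only with a small constant
  probability r0, and more than eta*n small columns occur with probability at most
  2^n r0^(eta n) <= exp(-(10/C) n).  As n ~ C M log M, this beats a union bound over a net of
  size exp(O(M log M)) on the unit sphere; counting columns with a large entry as bad makes the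
  net approximation uniform in x.

  Deterministically, suppose at most floor((1-alpha) n) - M columns are small and
  ||epsilon|| < delta/(2 sqrt M).  An edge surviving the pruning with value below delta/(2M)
  gives floor((1-alpha) n) + 1 pairwise disjoint edges of value below delta/(2M).  Disjointness
  lets at most #small of them touch a small vertex; each of the others has two large endpoints,
  hence |epsilon_e| > delta/(2M), and there are fewer than M such edges.
*)

theory Submission
  imports Defs
begin

section \<open>Real and complex Gaussians\<close>

definition normal_measure :: "real \<Rightarrow> real measure" where
  "normal_measure \<sigma> = density lborel (normal_density 0 \<sigma>)"

lemma prob_space_normal_measure: "\<sigma> > 0 \<Longrightarrow> prob_space (normal_measure \<sigma>)"
  unfolding normal_measure_def by (rule prob_space_normal_density) simp

lemma sets_normal_measure [measurable_cong, simp]: "sets (normal_measure \<sigma>) = sets borel"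
  unfolding normal_measure_def by simp

lemma measurable_Complex_pair [measurable]:
  "(\<lambda>(a, b). Complex a b) \<in> borel_measurable (borel \<Otimes>\<^sub>M borel)"
proof -
  have "(\<lambda>(a, b). Complex a b) = (\<lambda>p. complex_of_real (fst p) + \<i> * complex_of_real (snd p))"
    by (auto simp: fun_eq_iff complex_eq_iff)
  then show ?thesis by simp
qed

lemma CN_eq_distr_normal_pair:
  "CN s = distr (normal_measure (sqrt (s/2)) \<Otimes>\<^sub>M normal_measure (sqrt (s/2))) borel (\<lambda>(a, b). Complex a b)"
  unfolding CN_def normal_measure_def by simp

lemma sets_CN [measurable_cong, simp]: "sets (CN s) = sets borel"
  unfolding CN_def by simp

lemma prob_space_CN: assumes "s > 0" shows "prob_space (CN s)"
proof -
  interpret N: prob_space "normal_measure (sqrt (s/2))"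
    using assms by (intro prob_space_normal_measure) simp
  interpret P: pair_prob_space "normal_measure (sqrt (s/2))" "normal_measure (sqrt (s/2))" ..
  show ?thesis unfolding CN_eq_distr_normal_pair
    by (rule P.prob_space_distr) (simp add: measurable_cong_sets[OF sets_pair_measure_cong[OF sets_normal_measure sets_normal_measure]])
qed

context
  fixes \<sigma> :: real
  assumes \<sigma>: "\<sigma> > 0"
begin

interpretation N: prob_space "normal_measure \<sigma>"
  using \<sigma> by (rule prob_space_normal_measure)
interpretation P: pair_prob_space "normal_measure \<sigma>" "normal_measure \<sigma>" ..

private lemma sets_normal_pair:
  "sets (normal_measure \<sigma> \<Otimes>\<^sub>M normal_measure \<sigma>) = sets (borel \<Otimes>\<^sub>M borel)"
  by (rule sets_pair_measure_cong) simp_all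

private lemma distr_normal_pair_fst: "distr (normal_measure \<sigma> \<Otimes>\<^sub>M normal_measure \<sigma>) borel fst = normal_measure \<sigma>"
proof -
  have "distr (normal_measure \<sigma> \<Otimes>\<^sub>M normal_measure \<sigma>) borel fst
      = distr (normal_measure \<sigma> \<Otimes>\<^sub>M normal_measure \<sigma>) (normal_measure \<sigma>) fst"
    by (rule distr_cong) auto
  then show ?thesis using N.distr_pair_fst by simp
qed

private lemma distr_normal_pair_snd: "distr (normal_measure \<sigma> \<Otimes>\<^sub>M normal_measure \<sigma>) borel snd = normal_measure \<sigma>"
proof -
  have "distr (normal_measure \<sigma> \<Otimes>\<^sub>M normal_measure \<sigma>) borel snd
      = distr (distr (normal_measure \<sigma> \<Otimes>\<^sub>M normal_measure \<sigma>) (normal_measure \<sigma> \<Otimes>\<^sub>M normal_measure \<sigma>)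
          (\<lambda>(x, y). (y, x))) borel fst"
    by (subst distr_distr) (auto intro!: distr_cong simp: measurable_cong_sets[OF sets_normal_pair])
  then show ?thesis using P.distr_pair_swap[symmetric] distr_normal_pair_fst by simp
qed

lemma distributed_normal_pair_fst:
  "distributed (normal_measure \<sigma> \<Otimes>\<^sub>M normal_measure \<sigma>) lborel fst (normal_density 0 \<sigma>)"
  using distr_normal_pair_fst
  by (simp add: distributed_def normal_measure_def measurable_cong_sets[OF sets_normal_pair] distr_cong[OF refl sets_lborel[symmetric]])

lemma distributed_normal_pair_snd:
  "distributed (normal_measure \<sigma> \<Otimes>\<^sub>M normal_measure \<sigma>) lborel snd (normal_density 0 \<sigma>)"
  using distr_normal_pair_snd
  by (simp add: distributed_def normal_measure_def measurable_cong_sets[OF sets_normal_pair] distr_cong[OF refl sets_lborel[symmetric]])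

lemma indep_var_normal_pair: "prob_space.indep_var (normal_measure \<sigma> \<Otimes>\<^sub>M normal_measure \<sigma>) borel fst borel snd"
proof -
  have "distr (normal_measure \<sigma> \<Otimes>\<^sub>M normal_measure \<sigma>) (borel \<Otimes>\<^sub>M borel) (\<lambda>x. (fst x, snd x))
      = distr (normal_measure \<sigma> \<Otimes>\<^sub>M normal_measure \<sigma>) (borel \<Otimes>\<^sub>M borel) (\<lambda>x. x)"
    by (rule distr_cong) auto
  also have "\<dots> = normal_measure \<sigma> \<Otimes>\<^sub>M normal_measure \<sigma>"
    by (rule distr_id2) (simp add: sets_normal_pair)
  finally show ?thesis
    unfolding P.indep_var_distribution_eq distr_normal_pair_fst distr_normal_pair_snd
    by (simp add: measurable_cong_sets[OF sets_normal_pair])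
qed

lemma distributed_normal_pair_linear:
  assumes "a \<noteq> 0 \<or> b \<noteq> 0"
  shows "distributed (normal_measure \<sigma> \<Otimes>\<^sub>M normal_measure \<sigma>) lborel (\<lambda>x. a * fst x + b * snd x)
           (normal_density 0 (sqrt (a\<^sup>2 + b\<^sup>2) * \<sigma>))"
proof -
  have fst: "distributed (normal_measure \<sigma> \<Otimes>\<^sub>M normal_measure \<sigma>) lborel (\<lambda>x. a * fst x) (normal_density 0 (\<bar>a\<bar> * \<sigma>))"
    if "a \<noteq> 0"
    using P.normal_density_affine[OF distributed_normal_pair_fst \<sigma> that, of 0] by simp
  have snd: "distributed (normal_measure \<sigma> \<Otimes>\<^sub>M normal_measure \<sigma>) lborel (\<lambda>x. b * snd x) (normal_density 0 (\<bar>b\<bar> * \<sigma>))"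
    if "b \<noteq> 0"
    using P.normal_density_affine[OF distributed_normal_pair_snd \<sigma> that, of 0] by simp
  consider "a \<noteq> 0" "b \<noteq> 0" | "b = 0" | "a = 0" using assms by blast
  then show ?thesis
  proof cases
    case 1
    have "prob_space.indep_var (normal_measure \<sigma> \<Otimes>\<^sub>M normal_measure \<sigma>) borel (\<lambda>x. a * fst x) borel (\<lambda>x. b * snd x)"
      using P.indep_var_compose[OF indep_var_normal_pair, of "(*) a" borel "(*) b" borel] by (simp add: comp_def)
    from P.add_indep_normal[OF this _ _ fst[OF 1(1)] snd[OF 1(2)]]
    have "distributed (normal_measure \<sigma> \<Otimes>\<^sub>M normal_measure \<sigma>) lborel (\<lambda>x. a * fst x + b * snd x)
           (normal_density 0 (sqrt ((\<bar>a\<bar> * \<sigma>)\<^sup>2 + (\<bar>b\<bar> * \<sigma>)\<^sup>2)))"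
      using 1 \<sigma> by (simp add: comp_def)
    moreover have "sqrt ((\<bar>a\<bar> * \<sigma>)\<^sup>2 + (\<bar>b\<bar> * \<sigma>)\<^sup>2) = sqrt (a\<^sup>2 + b\<^sup>2) * \<sigma>"
      using \<sigma> by (simp add: power_mult_distrib real_sqrt_mult flip: distrib_right)
    ultimately show ?thesis by simp
  qed (use fst snd assms in auto)
qed

end

lemma distributed_CN_Re_mult_cnj:
  assumes s: "s > 0" and c: "c \<noteq> 0"
  shows "distributed (CN s) lborel (\<lambda>z. Re (c * cnj z)) (normal_density 0 (cmod c * sqrt (s / 2)))"
proof -
  define \<sigma> where "\<sigma> = sqrt (s / 2)"
  have \<sigma>: "\<sigma> > 0" using s by (simp add: \<sigma>_def)
  have sets: "sets (normal_measure \<sigma> \<Otimes>\<^sub>M normal_measure \<sigma>) = sets (borel \<Otimes>\<^sub>M borel)"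
    by (rule sets_pair_measure_cong) simp_all
  have "distr (CN s) lborel (\<lambda>z. Re (c * cnj z))
      = distr (normal_measure \<sigma> \<Otimes>\<^sub>M normal_measure \<sigma>) lborel ((\<lambda>z. Re (c * cnj z)) \<circ> (\<lambda>(a, b). Complex a b))"
    unfolding CN_eq_distr_normal_pair \<sigma>_def[symmetric]
    by (rule distr_distr) (simp_all add: measurable_cong_sets[OF sets])
  also have "\<dots> = distr (normal_measure \<sigma> \<Otimes>\<^sub>M normal_measure \<sigma>) lborel (\<lambda>x. Re c * fst x + Im c * snd x)"
    by (rule distr_cong) auto
  finally show ?thesis
    using distributed_normal_pair_linear[OF \<sigma>, of "Re c" "Im c"] c
    unfolding distributed_def \<sigma>_def
    by (simp add: complex_eq_iff cmod_def measurable_cong_sets[OF sets_CN])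
qed

lemma normal_density_le: "\<tau> > 0 \<Longrightarrow> normal_density 0 \<tau> x \<le> 1 / (\<tau> * sqrt (2 * pi))"
  by (simp add: normal_density_def real_sqrt_mult divide_le_eq mult.commute)

lemma (in prob_space) prob_abs_less_normal:
  assumes D: "distributed M lborel X (normal_density 0 \<tau>)" and \<tau>: "\<tau> > 0" and u: "u \<ge> 0"
  shows "prob {\<omega>\<in>space M. \<bar>X \<omega>\<bar> < u} \<le> 2 * u / (\<tau> * sqrt (2 * pi))"
proof -
  have X: "X \<in> M \<rightarrow>\<^sub>M lborel" using D by (rule distributed_measurable)
  have "{\<omega>\<in>space M. \<bar>X \<omega>\<bar> < u} = X -` {-u<..<u} \<inter> space M" by auto
  then have "emeasure M {\<omega>\<in>space M. \<bar>X \<omega>\<bar> < u} = emeasure (density lborel (normal_density 0 \<tau>)) {-u<..<u}"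
    using D emeasure_distr[OF X, of "{-u<..<u}"] by (simp add: distributed_def)
  also have "\<dots> = (\<integral>\<^sup>+x. ennreal (normal_density 0 \<tau> x) * indicator {-u<..<u} x \<partial>lborel)"
    by (simp add: emeasure_density)
  also have "\<dots> \<le> (\<integral>\<^sup>+x. ennreal (1 / (\<tau> * sqrt (2 * pi))) * indicator {-u<..<u} x \<partial>lborel)"
    by (intro nn_integral_mono mult_right_mono) (auto intro!: ennreal_leI normal_density_le[OF \<tau>])
  also have "\<dots> = ennreal (2 * u / (\<tau> * sqrt (2 * pi)))"
    using \<tau> u by (simp add: nn_integral_cmult_indicator ennreal_mult'[symmetric])
  finally show ?thesis
    unfolding measure_def using \<tau> u by (intro enn2real_leI) auto
qed

lemma (in prob_space) prob_abs_ge_normal: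
  assumes D: "distributed M lborel X (normal_density 0 \<tau>)" and \<tau>: "\<tau> > 0" and r: "r > 0"
  shows "prob {\<omega>\<in>space M. \<bar>X \<omega>\<bar> \<ge> r} \<le> \<tau>\<^sup>2 / r\<^sup>2"
proof -
  have X: "random_variable borel X" using distributed_measurable[OF D] by simp
  have "integrable lborel (\<lambda>x. normal_density 0 \<tau> x * x\<^sup>2)"
    using integrable_normal_moment[OF \<tau>, of 0 2] by simp
  then have "integrable M (\<lambda>\<omega>. (X \<omega>)\<^sup>2)"
    using distributed_integrable[OF D, of "\<lambda>x. x\<^sup>2"] by simp
  from Chebyshev_inequality[OF X this r] show ?thesis
    using normal_distributed_expectation[OF \<tau> D] normal_distributed_variance[OF \<tau> D] by simp
qed

lemma (in prob_space) prob_card_indep_events_ge: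
  assumes ind: "indep_vars N X {..<n}"
    and B: "\<And>i. i < n \<Longrightarrow> B i \<in> sets (N i)"
    and p: "\<And>i. i < n \<Longrightarrow> prob (X i -` B i \<inter> space M) \<le> r"
    and K: "K \<ge> 1" and r: "r \<ge> 0"
  shows "prob {\<omega>\<in>space M. K \<le> card {i. i < n \<and> X i \<omega> \<in> B i}} \<le> 2 ^ n * r ^ K"
proof -
  define \<S> where "\<S> = {S. S \<subseteq> {..<n} \<and> card S = K}"
  define F where "F S = (\<Inter>i\<in>S. X i -` B i \<inter> space M)" for S
  have fin: "finite \<S>" unfolding \<S>_def by (rule finite_subset[of _ "Pow {..<n}"]) auto
  have \<S>: "S \<noteq> {}" "finite S" "S \<subseteq> {..<n}" "card S = K" if "S \<in> \<S>" for S
    using that K unfolding \<S>_def by (auto intro: finite_subset)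
  have F: "F S \<in> events" if "S \<in> \<S>" for S
  proof -
    have "X i -` B i \<inter> space M \<in> events" if "i \<in> S" for i
      using ind \<S>[OF \<open>S \<in> \<S>\<close>] that B unfolding indep_vars_def by (auto intro!: measurable_sets)
    then show ?thesis unfolding F_def using \<S>[OF that] by (intro sets.finite_INT) auto
  qed
  have "{\<omega>\<in>space M. K \<le> card {i. i < n \<and> X i \<omega> \<in> B i}} \<subseteq> (\<Union>S\<in>\<S>. F S)"
  proof safe
    fix \<omega> assume \<omega>: "\<omega> \<in> space M" "K \<le> card {i. i < n \<and> X i \<omega> \<in> B i}"
    then obtain T where "T \<subseteq> {i. i < n \<and> X i \<omega> \<in> B i}" "card T = K" "finite T"
      by (meson obtain_subset_with_card_n)
    with \<omega> K show "\<omega> \<in> (\<Union>S\<in>\<S>. F S)" unfolding \<S>_def F_def by (intro UN_I[of T]) auto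
  qed
  then have "prob {\<omega>\<in>space M. K \<le> card {i. i < n \<and> X i \<omega> \<in> B i}} \<le> prob (\<Union>S\<in>\<S>. F S)"
    using F fin by (intro finite_measure_mono) auto
  also have "\<dots> \<le> (\<Sum>S\<in>\<S>. prob (F S))"
    using fin F by (intro measure_UNION_le) auto
  also have "\<dots> \<le> (\<Sum>S\<in>\<S>. r ^ K)"
  proof (intro sum_mono)
    fix S assume S: "S \<in> \<S>"
    have "prob (F S) = (\<Prod>i\<in>S. prob (X i -` B i \<inter> space M))"
      unfolding F_def using \<S>[OF S] B by (intro indep_varsD[OF ind]) auto
    also have "\<dots> \<le> (\<Prod>i\<in>S. r)"
      using \<S>[OF S] p by (intro prod_mono) auto
    finally show "prob (F S) \<le> r ^ K" using \<S>[OF S] by simp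
  qed
  also have "\<dots> \<le> 2 ^ n * r ^ K"
  proof -
    have "card \<S> \<le> card (Pow {..<n})"
      by (rule card_mono) (auto simp: \<S>_def)
    then have "real (card \<S>) \<le> 2 ^ n"
      by (simp add: card_Pow flip: of_nat_le_iff)
    then show ?thesis using r by (simp add: mult_right_mono)
  qed
  finally show ?thesis .
qed

section \<open>Matrices with independent complex Gaussian entries\<close>

definition bad_column :: "nat \<Rightarrow> (nat \<Rightarrow> complex) \<Rightarrow> real \<Rightarrow> real \<Rightarrow> (nat \<times> nat \<Rightarrow> complex) \<Rightarrow> nat \<Rightarrow> bool" where
  "bad_column M y T u \<Phi> i \<longleftrightarrow> (\<exists>k<M. cmod (\<Phi> (k, i)) \<ge> T) \<or> cmod (cinner M y (col \<Phi> i)) < u"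

locale iid_CN =
  fixes s :: real and I :: "(nat \<times> nat) set"
  assumes s_pos: "s > 0" and finite_I: "finite I"
begin

sublocale finite_product_prob_space "\<lambda>_. CN s" I
proof -
  interpret CN: prob_space "CN s" using s_pos by (rule prob_space_CN)
  show "finite_product_prob_space (\<lambda>_. CN s) I"
    by unfold_locales (auto simp: finite_I intro: CN.prob_space_axioms)
qed

abbreviation \<Omega> :: "(nat \<times> nat \<Rightarrow> complex) measure" where
  "\<Omega> \<equiv> PiM I (\<lambda>_. CN s)"

lemma measurable_entry_comp:
  assumes "j \<in> I" and f: "f \<in> borel_measurable borel"
  shows "(\<lambda>\<omega>. f (\<omega> j)) \<in> borel_measurable \<Omega>"
  using measurable_comp[of "\<lambda>\<omega>. \<omega> j" \<Omega> "CN s" f borel] assms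
  by (simp add: comp_def measurable_cong_sets[OF sets_CN])

lemma distributed_Re_mult_cnj_entry:
  assumes j: "j \<in> I" and c: "c \<noteq> 0"
  shows "distributed \<Omega> lborel (\<lambda>\<omega>. Re (c * cnj (\<omega> j))) (normal_density 0 (cmod c * sqrt (s / 2)))"
proof -
  have j_meas: "(\<lambda>\<omega>. \<omega> j) \<in> \<Omega> \<rightarrow>\<^sub>M CN s" using j by simp
  have f_meas: "(\<lambda>z. Re (c * cnj z)) \<in> CN s \<rightarrow>\<^sub>M lborel" by (simp add: measurable_cong_sets[OF sets_CN])
  have "distr \<Omega> lborel (\<lambda>\<omega>. Re (c * cnj (\<omega> j))) = distr (distr \<Omega> (CN s) (\<lambda>\<omega>. \<omega> j)) lborel (\<lambda>z. Re (c * cnj z))"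
    by (subst distr_distr[OF f_meas j_meas]) (simp add: comp_def)
  also have "\<dots> = distr (CN s) lborel (\<lambda>z. Re (c * cnj z))"
    by (simp add: PiM_component[OF j])
  finally show ?thesis
    using distributed_CN_Re_mult_cnj[OF s_pos c] measurable_comp[OF j_meas f_meas]
    unfolding distributed_def by (simp add: comp_def)
qed

lemma indep_vars_entries:
  assumes t: "inj_on t J" "t ` J \<subseteq> I" and J: "J \<noteq> {}"
  shows "indep_vars (\<lambda>_. CN s) (\<lambda>k \<omega>. \<omega> (t k)) J"
proof (subst indep_vars_iff_distr_eq_PiM'[OF J])
  show "(\<lambda>\<omega>. \<omega> (t k)) \<in> \<Omega> \<rightarrow>\<^sub>M CN s" if "k \<in> J" for k
    using t that by auto
  have "(\<Pi>\<^sub>M k\<in>J. distr \<Omega> (CN s) (\<lambda>\<omega>. \<omega> (t k))) = (\<Pi>\<^sub>M k\<in>J. CN s)"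
    by (intro PiM_cong refl) (use t in \<open>auto simp: PiM_component\<close>)
  moreover have "distr \<Omega> (\<Pi>\<^sub>M k\<in>J. CN s) (\<lambda>x. \<lambda>k\<in>J. x (t k)) = (\<Pi>\<^sub>M k\<in>J. CN s)"
    using distr_reorder[of t J I] t finite_I by auto
  ultimately show "distr \<Omega> (\<Pi>\<^sub>M k\<in>J. CN s) (\<lambda>x. \<lambda>k\<in>J. x (t k)) = (\<Pi>\<^sub>M k\<in>J. distr \<Omega> (CN s) (\<lambda>\<omega>. \<omega> (t k)))"
    by simp
qed

lemma measurable_cinner_col:
  assumes "{..<M} \<times> {i} \<subseteq> I"
  shows "(\<lambda>\<omega>. cinner M y (col \<omega> i)) \<in> borel_measurable \<Omega>"
  unfolding cinner_def col_def using assms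
  by (intro borel_measurable_sum measurable_entry_comp[where f="\<lambda>z. y _ * cnj z"])
     (auto intro!: borel_measurable_continuous_onI continuous_intros)

lemma distributed_Re_cinner_col:
  assumes i: "{..<M} \<times> {i} \<subseteq> I" and y: "\<exists>k<M. y k \<noteq> 0"
  shows "distributed \<Omega> lborel (\<lambda>\<omega>. Re (cinner M y (col \<omega> i)))
           (normal_density 0 (sqrt (s / 2) * sqrt (\<Sum>k<M. (cmod (y k))\<^sup>2)))"
proof -
  define S where "S = {k. k < M \<and> y k \<noteq> 0}"
  have S: "finite S" "S \<noteq> {}" using y by (auto simp: S_def)
  have "indep_vars (\<lambda>_. CN s) (\<lambda>k \<omega>. \<omega> (k, i)) S"
    by (rule indep_vars_entries) (use i S in \<open>auto simp: S_def inj_on_def\<close>)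
  then have ind: "indep_vars (\<lambda>_. borel) (\<lambda>k \<omega>. Re (y k * cnj (\<omega> (k, i)))) S"
    using indep_vars_compose2[of "\<lambda>_. CN s" _ S "\<lambda>k z. Re (y k * cnj z)" "\<lambda>_. borel"]
    by (simp add: measurable_cong_sets[OF sets_CN])
  have D: "distributed \<Omega> lborel (\<lambda>\<omega>. \<Sum>k\<in>S. Re (y k * cnj (\<omega> (k, i))))
      (normal_density (\<Sum>k\<in>S. 0) (sqrt (\<Sum>k\<in>S. (cmod (y k) * sqrt (s / 2))\<^sup>2)))"
    using S ind s_pos i
    by (intro sum_indep_normal distributed_Re_mult_cnj_entry) (auto simp: S_def)
  have "(\<lambda>\<omega>. Re (cinner M y (col \<omega> i))) = (\<lambda>\<omega>. \<Sum>k\<in>S. Re (y k * cnj (\<omega> (k, i))))"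
    unfolding cinner_def col_def Re_sum by (intro ext sum.mono_neutral_right) (auto simp: S_def)
  moreover have "(\<Sum>k\<in>S. (cmod (y k) * sqrt (s / 2))\<^sup>2) = s / 2 * (\<Sum>k<M. (cmod (y k))\<^sup>2)"
    using s_pos unfolding sum_distrib_left
    by (intro sum.mono_neutral_cong_left) (auto simp: S_def power_mult_distrib)
  ultimately show ?thesis
    using D by (simp only: sum.neutral_const real_sqrt_mult)
qed

lemma prob_cinner_col_less:
  assumes i: "{..<M} \<times> {i} \<subseteq> I" and L: "L > 0" "(\<Sum>k<M. (cmod (y k))\<^sup>2) \<ge> L" and u: "u \<ge> 0"
  shows "prob {\<omega>\<in>space \<Omega>. cmod (cinner M y (col \<omega> i)) < u}
           \<le> 2 * u / (sqrt (s / 2) * sqrt L * sqrt (2 * pi))"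
proof -
  define \<tau> where "\<tau> = sqrt (s / 2) * sqrt (\<Sum>k<M. (cmod (y k))\<^sup>2)"
  have "\<exists>k<M. y k \<noteq> 0"
  proof (rule ccontr)
    assume "\<not> (\<exists>k<M. y k \<noteq> 0)"
    then have "(\<Sum>k<M. (cmod (y k))\<^sup>2) = 0" by simp
    then show False using L by simp
  qed
  then have D: "distributed \<Omega> lborel (\<lambda>\<omega>. Re (cinner M y (col \<omega> i))) (normal_density 0 \<tau>)"
    unfolding \<tau>_def by (rule distributed_Re_cinner_col[OF i])
  have \<tau>: "\<tau> > 0" "sqrt (s / 2) * sqrt L \<le> \<tau>"
    unfolding \<tau>_def using s_pos L by (auto intro: mult_left_mono)
  have "prob {\<omega>\<in>space \<Omega>. cmod (cinner M y (col \<omega> i)) < u}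
      \<le> prob {\<omega>\<in>space \<Omega>. \<bar>Re (cinner M y (col \<omega> i))\<bar> < u}"
    using abs_Re_le_cmod measurable_cinner_col[OF i, of y]
    by (intro finite_measure_mono) (auto intro: le_less_trans)
  also have "\<dots> \<le> 2 * u / (\<tau> * sqrt (2 * pi))"
    by (rule prob_abs_less_normal[OF D \<tau>(1) u])
  also have "\<dots> \<le> 2 * u / (sqrt (s / 2) * sqrt L * sqrt (2 * pi))"
    using \<tau> u s_pos L by (intro divide_left_mono mult_right_mono mult_pos_pos) auto
  finally show ?thesis .
qed

lemma prob_entry_ge:
  assumes j: "j \<in> I" and T: "T > 0"
  shows "prob {\<omega>\<in>space \<Omega>. cmod (\<omega> j) \<ge> T} \<le> 4 * s / T\<^sup>2"
proof -
  have D: "distributed \<Omega> lborel (\<lambda>\<omega>. Re (c * cnj (\<omega> j))) (normal_density 0 (sqrt (s / 2)))"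
    if "cmod c = 1" for c
  proof -
    have "c \<noteq> 0" using that by auto
    then show ?thesis using distributed_Re_mult_cnj_entry[OF j, of c] that by simp
  qed
  define A where "A c = {\<omega>\<in>space \<Omega>. \<bar>Re (c * cnj (\<omega> j))\<bar> \<ge> T / 2}" for c
  have A: "A c \<in> events" for c
  proof -
    have "(\<lambda>\<omega>. \<bar>Re (c * cnj (\<omega> j))\<bar>) \<in> borel_measurable \<Omega>"
      by (rule measurable_entry_comp[OF j]) simp
    then show ?thesis unfolding A_def by measurable
  qed
  have PA: "prob (A c) \<le> 2 * s / T\<^sup>2" if "cmod c = 1" for c
  proof -
    have "prob (A c) \<le> (sqrt (s / 2))\<^sup>2 / (T / 2)\<^sup>2"
      unfolding A_def using T s_pos by (intro prob_abs_ge_normal[OF D[OF that]]) auto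
    also have "\<dots> = 2 * s / T\<^sup>2"
      using s_pos by (simp add: power_divide)
    finally show ?thesis .
  qed
  have "{\<omega>\<in>space \<Omega>. cmod (\<omega> j) \<ge> T} \<subseteq> A 1 \<union> A \<i>"
  proof safe
    fix \<omega> assume "\<omega> \<in> space \<Omega>" "T \<le> cmod (\<omega> j)" "\<omega> \<notin> A \<i>"
    then have "T \<le> \<bar>Re (\<omega> j)\<bar> + \<bar>Im (\<omega> j)\<bar>" "\<bar>Im (\<omega> j)\<bar> < T / 2"
      using cmod_le[of "\<omega> j"] unfolding A_def by auto
    then show "\<omega> \<in> A 1" using \<open>\<omega> \<in> space \<Omega>\<close> unfolding A_def by simp
  qed
  then have "prob {\<omega>\<in>space \<Omega>. cmod (\<omega> j) \<ge> T} \<le> prob (A 1 \<union> A \<i>)"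
    using A by (intro finite_measure_mono) auto
  also have "\<dots> \<le> prob (A 1) + prob (A \<i>)"
    using A[of 1] A[of \<i>] by (rule measure_Un_le)
  also have "\<dots> \<le> 4 * s / T\<^sup>2"
    using PA[of 1] PA[of \<i>] by simp
  finally show ?thesis .
qed

lemma sets_bad_column:
  assumes "{..<M} \<times> {i} \<subseteq> I"
  shows "{\<omega>\<in>space \<Omega>. bad_column M y T u \<omega> i} \<in> events"
proof -
  have "(\<lambda>\<omega>. cmod (\<omega> (k, i))) \<in> borel_measurable \<Omega>" if "k < M" for k
    using that assms by (intro measurable_entry_comp) auto
  moreover have "{\<omega>\<in>space \<Omega>. bad_column M y T u \<omega> i} =
     (\<Union>k<M. {\<omega>\<in>space \<Omega>. cmod (\<omega> (k, i)) \<ge> T}) \<union> {\<omega>\<in>space \<Omega>. cmod (cinner M y (col \<omega> i)) < u}"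
    unfolding bad_column_def by auto
  ultimately show ?thesis
    using measurable_cinner_col[OF assms, of y] by simp
qed

lemma prob_bad_column:
  assumes i: "{..<M} \<times> {i} \<subseteq> I" and L: "L > 0" "(\<Sum>k<M. (cmod (y k))\<^sup>2) \<ge> L"
    and u: "u \<ge> 0" and T: "T > 0"
  shows "prob {\<omega>\<in>space \<Omega>. bad_column M y T u \<omega> i}
           \<le> 2 * u / (sqrt (s / 2) * sqrt L * sqrt (2 * pi)) + M * (4 * s / T\<^sup>2)"
proof -
  define large where "large k = {\<omega>\<in>space \<Omega>. cmod (\<omega> (k, i)) \<ge> T}" for k
  define small where "small = {\<omega>\<in>space \<Omega>. cmod (cinner M y (col \<omega> i)) < u}"
  have large: "large k \<in> events" if "k < M" for k
    unfolding large_def using that i measurable_entry_comp[of "(k, i)" "\<lambda>z. cmod z"] by auto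
  have small: "small \<in> events"
    unfolding small_def using measurable_cinner_col[OF i, of y] by measurable
  have "prob {\<omega>\<in>space \<Omega>. bad_column M y T u \<omega> i} = prob ((\<Union>k<M. large k) \<union> small)"
    unfolding bad_column_def large_def small_def by (rule arg_cong[where f=prob]) auto
  also have "\<dots> \<le> prob (\<Union>k<M. large k) + prob small"
    using large small by (intro measure_Un_le) auto
  also have "\<dots> \<le> (\<Sum>k<M. prob (large k)) + prob small"
    using large by (intro add_right_mono measure_UNION_le) auto
  also have "\<dots> \<le> (\<Sum>k<M. 4 * s / T\<^sup>2) + 2 * u / (sqrt (s / 2) * sqrt L * sqrt (2 * pi))"
    unfolding large_def small_def using i
    by (intro add_mono sum_mono prob_entry_ge T prob_cinner_col_less L u) auto
  finally show ?thesis by simp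
qed

lemma sets_many_bad_columns:
  assumes I: "I = {..<M} \<times> {..<n}"
  shows "{\<omega>\<in>space \<Omega>. K \<le> card {i. i < n \<and> bad_column M y T u \<omega> i}} \<in> events"
proof -
  define B where "B i = {\<omega>\<in>space \<Omega>. bad_column M y T u \<omega> i}" for i
  have B: "B i \<in> events" if "i < n" for i
    unfolding B_def by (rule sets_bad_column) (use that I in auto)
  have count: "real (card {i. i < n \<and> bad_column M y T u \<omega> i}) = (\<Sum>i<n. indicator (B i) \<omega>)"
    if "\<omega> \<in> space \<Omega>" for \<omega>
  proof -
    have "(\<Sum>i<n. indicator (B i) \<omega> :: real) = (\<Sum>i<n. if bad_column M y T u \<omega> i then 1 else 0)"
      using that by (intro sum.cong) (auto simp: B_def)
    also have "\<dots> = real (card ({..<n} \<inter> {i. bad_column M y T u \<omega> i}))"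
      by (simp add: sum.If_cases)
    finally show ?thesis by (simp add: Int_def)
  qed
  have "{\<omega>\<in>space \<Omega>. K \<le> card {i. i < n \<and> bad_column M y T u \<omega> i}}
      = {\<omega>\<in>space \<Omega>. real K \<le> (\<Sum>i<n. indicator (B i) \<omega>)}"
  proof (intro Collect_cong conj_cong refl)
    fix \<omega> assume "\<omega> \<in> space \<Omega>"
    then show "(K \<le> card {i. i < n \<and> bad_column M y T u \<omega> i}) = (real K \<le> (\<Sum>i<n. indicator (B i) \<omega>))"
      unfolding count[OF \<open>\<omega> \<in> space \<Omega>\<close>, symmetric] by simp
  qed
  also have "\<dots> \<in> events"
    using B by measurable
  finally show ?thesis .
qed

lemma prob_many_bad_columns:
  assumes I: "I = {..<M} \<times> {..<n}" and M: "M > 0" and n: "n > 0"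
    and L: "L > 0" "(\<Sum>k<M. (cmod (y k))\<^sup>2) \<ge> L" and u: "u \<ge> 0" and T: "T > 0" and K: "K \<ge> 1"
  shows "prob {\<omega>\<in>space \<Omega>. K \<le> card {i. i < n \<and> bad_column M y T u \<omega> i}}
           \<le> 2 ^ n * (2 * u / (sqrt (s / 2) * sqrt L * sqrt (2 * pi)) + M * (4 * s / T\<^sup>2)) ^ K"
proof -
  define r where "r = 2 * u / (sqrt (s / 2) * sqrt L * sqrt (2 * pi)) + M * (4 * s / T\<^sup>2)"
  define column where "column i = {..<M} \<times> {i}" for i :: nat
  define X where "X i \<omega> = restrict \<omega> (column i)" for i and \<omega> :: "nat \<times> nat \<Rightarrow> complex"
  define B where "B i = {\<omega>\<in>space (PiM (column i) (\<lambda>_. CN s)). bad_column M y T u \<omega> i}" for i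
  have "indep_vars (\<lambda>_. CN s) (\<lambda>k \<omega>. \<omega> k) I"
    using indep_vars_entries[of id I] I M n by auto
  then have ind: "indep_vars (\<lambda>i. PiM (column i) (\<lambda>_. CN s)) X {..<n}"
    using indep_vars_restrict[of "\<lambda>_. CN s" "\<lambda>k \<omega>. \<omega> k" I "{..<n}" column] unfolding X_def
    by (auto simp: column_def I disjoint_family_on_def)
  have B: "B i \<in> sets (PiM (column i) (\<lambda>_. CN s))" for i
    unfolding B_def
    by (rule iid_CN.sets_bad_column) (auto simp: iid_CN_def s_pos column_def)
  have bad_X: "bad_column M y T u (X i \<omega>) i = bad_column M y T u \<omega> i" for i \<omega>
    unfolding bad_column_def cinner_def col_def X_def column_def by auto
  have preimage: "X i -` B i \<inter> space \<Omega> = {\<omega>\<in>space \<Omega>. bad_column M y T u \<omega> i}" if "i < n" for i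
    using that bad_X unfolding B_def X_def column_def I by (auto simp: space_PiM)
  have "prob {\<omega>\<in>space \<Omega>. K \<le> card {i. i < n \<and> X i \<omega> \<in> B i}} \<le> 2 ^ n * r ^ K"
  proof (rule prob_card_indep_events_ge[OF ind B _ K])
    show "prob (X i -` B i \<inter> space \<Omega>) \<le> r" if "i < n" for i
      unfolding preimage[OF that] r_def by (rule prob_bad_column[OF _ L u T]) (use that I in auto)
    show "0 \<le> r" unfolding r_def using u s_pos T L by (intro add_nonneg_nonneg) auto
  qed
  moreover have "{i. i < n \<and> X i \<omega> \<in> B i} = {i. i < n \<and> bad_column M y T u \<omega> i}" if "\<omega> \<in> space \<Omega>" for \<omega>
    using preimage that by blast
  ultimately show ?thesis unfolding r_def
    by (simp cong: conj_cong)
qed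

end

section \<open>Pruning and projective uniformity\<close>

lemma prune_steps_removed_edges:
  assumes "(prune_step E f ^^ m) V J" and e: "e \<in> E" "e \<subseteq> J" and nonempty: "{} \<notin> E"
  shows "\<exists>S\<subseteq>E. finite S \<and> card S = m \<and> disjoint S \<and> (\<forall>a\<in>S. f a \<le> f e \<and> a \<inter> J = {})"
  using assms(1) e(2)
proof (induction m arbitrary: J)
  case 0
  then show ?case by auto
next
  case (Suc m)
  then obtain H where H: "(prune_step E f ^^ m) V H" "prune_step E f H J"
    by auto
  have "J \<subseteq> H" using H(2) unfolding prune_step_def by auto
  with Suc.prems(2) have eH: "e \<subseteq> H" by blast
  obtain S where S: "S \<subseteq> E" "finite S" "card S = m" "disjoint S" "\<forall>a\<in>S. f a \<le> f e \<and> a \<inter> H = {}"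
    using Suc.IH[OF H(1) eH] by blast
  have "\<not> (\<forall>a\<in>E. \<not> a \<subseteq> H)" using e(1) eH by blast
  then obtain e' where e': "e' \<in> E" "e' \<subseteq> H" "\<forall>a\<in>E. a \<subseteq> H \<longrightarrow> f e' \<le> f a" "J = H - e'"
    using H(2) unfolding prune_step_def by blast
  have "f e' \<le> f e" using e'(3) e(1) eH by blast
  have "e' \<noteq> {}" using e'(1) nonempty by blast
  then have "e' \<notin> S" using S(5) e'(2) by blast
  have "disjoint (insert e' S)"
    using S(4,5) e'(2) by (auto simp: pairwise_insert disjnt_def)
  moreover have "\<forall>a\<in>insert e' S. f a \<le> f e \<and> a \<inter> J = {}"
    using S(5) e'(4) \<open>f e' \<le> f e\<close> by auto
  ultimately show ?case
    using S e'(1) \<open>e' \<notin> S\<close> by (intro exI[of _ "insert e' S"] conjI) auto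
qed

lemma card_disjoint_meeting_le:
  assumes "disjoint S" "finite A"
  shows "card {b\<in>S. b \<inter> A \<noteq> {}} \<le> card A"
  using assms by (intro card_le_if_inj_on_rel[where r="\<lambda>b v. v \<in> b"])
    (auto simp: pairwise_def disjnt_def)

lemma card_large_noise_less:
  assumes "finite E" "c > 0" "noise_norm E \<epsilon> < c * sqrt M"
  shows "card {b\<in>E. cmod (\<epsilon> b) > c} < M"
proof -
  let ?L = "{b\<in>E. cmod (\<epsilon> b) > c}"
  have "real (card ?L) * c\<^sup>2 = (\<Sum>b\<in>?L. c\<^sup>2)" by simp
  also have "\<dots> \<le> (\<Sum>b\<in>?L. (cmod (\<epsilon> b))\<^sup>2)"
    using assms(2) by (intro sum_mono power_mono) auto
  also have "\<dots> \<le> (\<Sum>b\<in>E. (cmod (\<epsilon> b))\<^sup>2)"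
    using assms(1) by (intro sum_mono2) auto
  also have "\<dots> = (noise_norm E \<epsilon>)\<^sup>2"
    unfolding noise_norm_def by (simp add: sum_nonneg)
  also have "\<dots> < (c * sqrt M)\<^sup>2"
    using assms(3) by (intro power_strict_mono) (auto simp: noise_norm_def sum_nonneg)
  also have "\<dots> = real M * c\<^sup>2"
    by (simp add: power_mult_distrib)
  finally show ?thesis using assms(2) by simp
qed

lemma noise_large_if_endpoints_large:
  assumes e: "finite e" "e \<noteq> {}" and c: "c \<ge> 0"
    and large: "\<And>i. i \<in> e \<Longrightarrow> (cmod (cinner M x (col \<Phi> i)))\<^sup>2 \<ge> 2 * c"
    and f: "cmod (fval M \<Phi> x \<epsilon> e) < c"
  shows "cmod (\<epsilon> e) > c"
proof -
  let ?a = "\<lambda>i. cmod (cinner M x (col \<Phi> i))"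
  have "sqrt (2 * c) \<le> ?a i" if "i \<in> e" for i
    using large[OF that] by (simp add: real_le_lsqrt)
  then have "sqrt (2 * c) * sqrt (2 * c) \<le> ?a (Min e) * ?a (Max e)"
    using e c by (intro mult_mono) auto
  also have "\<dots> = cmod (fval M \<Phi> x \<epsilon> e - \<epsilon> e)"
    by (simp add: fval_def norm_mult)
  also have "\<dots> \<le> cmod (fval M \<Phi> x \<epsilon> e) + cmod (\<epsilon> e)"
    by (rule norm_triangle_ineq4)
  finally show ?thesis using c f by simp
qed

lemma card_disjoint_low_edges_less:
  assumes E: "E \<subseteq> {e. e \<subseteq> {..<n} \<and> card e = 2}" and c: "c > 0"
    and noise: "noise_norm E \<epsilon> < c * sqrt M"
    and S: "S \<subseteq> E" "disjoint S" "\<forall>b\<in>S. cmod (fval M \<Phi> x \<epsilon> b) < c"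
  shows "card S < card {i. i < n \<and> (cmod (cinner M x (col \<Phi> i)))\<^sup>2 < 2 * c} + M"
proof -
  define small where "small = {i. i < n \<and> (cmod (cinner M x (col \<Phi> i)))\<^sup>2 < 2 * c}"
  have finE: "finite E" using E by (rule finite_subset) (auto intro: finite_subset[of _ "Pow {..<n}"])
  have "card {b\<in>S. b \<inter> small \<noteq> {}} \<le> card small"
    using S(2) by (rule card_disjoint_meeting_le) (simp add: small_def)
  moreover have "{b\<in>S. b \<inter> small = {}} \<subseteq> {b\<in>E. cmod (\<epsilon> b) > c}"
  proof safe
    fix b assume b: "b \<in> S" "b \<inter> small = {}"
    then have "b \<in> E" using S(1) by auto
    then have "b \<subseteq> {..<n}" "card b = 2" using E by auto
    then have "finite b" "b \<noteq> {}" by (auto intro: card_ge_0_finite)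
    moreover have "(cmod (cinner M x (col \<Phi> i)))\<^sup>2 \<ge> 2 * c" if "i \<in> b" for i
      using b(2) that \<open>b \<subseteq> {..<n}\<close> unfolding small_def by auto
    ultimately show "cmod (\<epsilon> b) > c"
      using S(3) b(1) c by (intro noise_large_if_endpoints_large[of b c M x \<Phi> \<epsilon>]) auto
  qed (use S in auto)
  then have "card {b\<in>S. b \<inter> small = {}} \<le> card {b\<in>E. cmod (\<epsilon> b) > c}"
    using finE by (intro card_mono) auto
  moreover have "card S \<le> card {b\<in>S. b \<inter> small \<noteq> {}} + card {b\<in>S. b \<inter> small = {}}"
  proof -
    have "card S = card ({b\<in>S. b \<inter> small \<noteq> {}} \<union> {b\<in>S. b \<inter> small = {}})"
      by (rule arg_cong[where f=card]) auto
    then show ?thesis using card_Un_le by simp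
  qed
  ultimately show ?thesis
    using card_large_noise_less[OF finE c noise] unfolding small_def by linarith
qed

lemma PUN_ge_if_few_small_columns:
  assumes M: "M \<ge> 1" and \<delta>: "\<delta> > 0" and E: "E \<subseteq> {e. e \<subseteq> {..<n} \<and> card e = 2}"
    and noise: "noise_norm E \<epsilon> < (\<delta> / 2) / sqrt M"
    and few: "\<And>x. (\<Sum>k<M. (cmod (x k))\<^sup>2) = 1 \<Longrightarrow>
              card {i. i < n \<and> (cmod (cinner M x (col \<Phi> i)))\<^sup>2 < \<delta> / M} + M \<le> nat \<lfloor>(1 - \<alpha>) * real n\<rfloor>"
  shows "PUN M n E \<Phi> \<alpha> \<epsilon> \<ge> ereal ((\<delta> / 2) / M)"
  unfolding PUN_def
proof (intro INF_greatest)
  define c where "c = (\<delta> / 2) / M"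
  have c: "c > 0" using \<delta> M by (simp add: c_def)
  have "sqrt M * sqrt M = real M" by simp
  then have "c * sqrt M = (\<delta> / 2) / sqrt M"
    unfolding c_def using M by (simp add: field_simps)
  then have noise_c: "noise_norm E \<epsilon> < c * sqrt M" using noise by simp
  have "card b = 2" if "b \<in> E" for b using E that by auto
  then have "{} \<notin> E" by force
  fix x J e
  assume x: "x \<in> {x. (\<Sum>k<M. (cmod (x k))\<^sup>2) = 1}"
    and "J \<in> pruned_sets {..<n} E (\<lambda>e. cmod (fval M \<Phi> x \<epsilon> e)) \<alpha>"
    and "e \<in> {e \<in> E. e \<subseteq> J}"
  define f where "f b = cmod (fval M \<Phi> x \<epsilon> b)" for b
  define m where "m = nat \<lfloor>(1 - \<alpha>) * real n\<rfloor>"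
  have J: "(prune_step E f ^^ m) {..<n} J" and e: "e \<in> E" "e \<subseteq> J"
    using \<open>J \<in> _\<close> \<open>e \<in> _\<close> unfolding pruned_sets_def f_def m_def by auto
  show "ereal c \<le> ereal (cmod (fval M \<Phi> x \<epsilon> e))"
  proof (rule ccontr)
    assume "\<not> ?thesis"
    then have fe: "f e < c" unfolding f_def by simp
    from prune_steps_removed_edges[OF J e \<open>{} \<notin> E\<close>]
    obtain S where S: "S \<subseteq> E" "finite S" "card S = m" "disjoint S" "\<forall>a\<in>S. f a \<le> f e \<and> a \<inter> J = {}"
      by auto
    have "e \<noteq> {}" using e(1) \<open>{} \<notin> E\<close> by blast
    then have "e \<notin> S" using S(5) e(2) by blast
    then have "card (insert e S) = Suc m" using S by simp
    moreover have "disjoint (insert e S)"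
      using S(4,5) e(2) by (auto simp: pairwise_insert disjnt_def)
    moreover have "\<forall>b\<in>insert e S. cmod (fval M \<Phi> x \<epsilon> b) < c"
      using S(5) fe unfolding f_def by (auto intro: le_less_trans)
    ultimately have "card (insert e S) < card {i. i < n \<and> (cmod (cinner M x (col \<Phi> i)))\<^sup>2 < 2 * c} + M"
      using S(1) e(1) by (intro card_disjoint_low_edges_less[OF E c noise_c]) auto
    moreover have "2 * c = \<delta> / M" by (simp add: c_def)
    ultimately show False
      using few[of x] x \<open>card (insert e S) = Suc m\<close> unfolding m_def by auto
  qed
qed

section \<open>A net on the unit sphere\<close>

definition grid_radius :: "real \<Rightarrow> int" where
  "grid_radius h = \<lceil>1 / h\<rceil> + 1"

definition grid :: "real \<Rightarrow> complex set" where
  "grid h = (\<lambda>(a, b). Complex (h * of_int a) (h * of_int b))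
              ` ({- grid_radius h..grid_radius h} \<times> {- grid_radius h..grid_radius h})"

definition net :: "nat \<Rightarrow> real \<Rightarrow> (nat \<Rightarrow> complex) set" where
  "net M h = (\<lambda>f k. if k < M then f k else 0) ` (PiE {..<M} (\<lambda>_. grid h))"

lemma finite_grid: "finite (grid h)"
  unfolding grid_def by simp

lemma finite_net: "finite (net M h)"
  unfolding net_def by (intro finite_imageI finite_PiE) (auto simp: finite_grid)

lemma card_net_le: "card (net M h) \<le> nat (2 * grid_radius h + 1) ^ (2 * M)"
proof -
  have "card (grid h) \<le> card ({- grid_radius h..grid_radius h} \<times> {- grid_radius h..grid_radius h})"
    unfolding grid_def by (rule card_image_le) simp
  then have grid: "card (grid h) \<le> nat (2 * grid_radius h + 1) ^ 2"
    by (simp add: card_cartesian_product power2_eq_square)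
  have "card (net M h) \<le> card (PiE {..<M} (\<lambda>_. grid h))"
    unfolding net_def by (rule card_image_le, intro finite_PiE) (auto simp: finite_grid)
  also have "\<dots> = card (grid h) ^ M" by (simp add: card_PiE)
  also have "\<dots> \<le> (nat (2 * grid_radius h + 1) ^ 2) ^ M" using grid by (rule power_mono) simp
  finally show ?thesis by (simp add: power_mult)
qed

lemma floor_divide_in_grid:
  assumes h: "h > 0" and r: "\<bar>r\<bar> \<le> 1"
  shows "\<lfloor>r / h\<rfloor> \<in> {- grid_radius h..grid_radius h}" "\<bar>r - h * \<lfloor>r / h\<rfloor>\<bar> < h"
proof -
  have "\<bar>r / h\<bar> \<le> 1 / h" using r h by (simp add: abs_divide divide_right_mono)
  also have "\<dots> \<le> of_int \<lceil>1 / h\<rceil>" by (rule le_of_int_ceiling)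
  finally have "- of_int \<lceil>1 / h\<rceil> - 1 < (of_int \<lfloor>r / h\<rfloor> :: real)" "(of_int \<lfloor>r / h\<rfloor> :: real) \<le> of_int \<lceil>1 / h\<rceil>"
    using of_int_floor_le[of "r / h"] real_of_int_floor_gt_diff_one[of "r / h"] by linarith+
  then show "\<lfloor>r / h\<rfloor> \<in> {- grid_radius h..grid_radius h}"
    unfolding grid_radius_def by simp
  have "of_int \<lfloor>r / h\<rfloor> * h \<le> r"
    using mult_right_mono[of "of_int \<lfloor>r / h\<rfloor>" "r / h" h] h by simp
  moreover have "r < (of_int \<lfloor>r / h\<rfloor> + 1) * h"
    using mult_strict_right_mono[of "r / h" "of_int \<lfloor>r / h\<rfloor> + 1" h] h by simp
  ultimately show "\<bar>r - h * \<lfloor>r / h\<rfloor>\<bar> < h" by (simp add: algebra_simps)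
qed

lemma net_approx:
  assumes h: "h > 0" and x: "\<And>k. k < M \<Longrightarrow> cmod (x k) \<le> 1"
  shows "\<exists>y\<in>net M h. \<forall>k<M. cmod (x k - y k) < 2 * h"
proof -
  define r where "r k = Complex (h * of_int \<lfloor>Re (x k) / h\<rfloor>) (h * of_int \<lfloor>Im (x k) / h\<rfloor>)" for k
  have ReIm: "\<bar>Re (x k)\<bar> \<le> 1" "\<bar>Im (x k)\<bar> \<le> 1" if "k < M" for k
    using x[OF that] abs_Re_le_cmod abs_Im_le_cmod order.trans by blast+
  have "r k \<in> grid h" if "k < M" for k
    unfolding r_def grid_def using floor_divide_in_grid(1)[OF h ReIm(1)[OF that]]
      floor_divide_in_grid(1)[OF h ReIm(2)[OF that]] by force
  then have "(\<lambda>k. if k < M then r k else 0) \<in> net M h"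
    unfolding net_def by (intro image_eqI[of _ _ "restrict r {..<M}"]) auto
  moreover have "cmod (x k - r k) < 2 * h" if "k < M" for k
  proof -
    have "cmod (x k - r k) \<le> \<bar>Re (x k - r k)\<bar> + \<bar>Im (x k - r k)\<bar>" by (rule cmod_le)
    also have "\<dots> < h + h"
      using floor_divide_in_grid(2)[OF h ReIm(1)[OF that]] floor_divide_in_grid(2)[OF h ReIm(2)[OF that]]
      unfolding r_def by (intro add_strict_mono) simp_all
    finally show ?thesis by simp
  qed
  ultimately show ?thesis by (intro bexI[of _ "\<lambda>k. if k < M then r k else 0"]) auto
qed

lemma norm_le_1_if_sum_sq_eq_1:
  fixes M k :: nat
  assumes "(\<Sum>k<M. (cmod (x k))\<^sup>2) = 1" "k < M"
  shows "cmod (x k) \<le> 1"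
proof -
  have "(cmod (x k))\<^sup>2 \<le> (\<Sum>k<M. (cmod (x k))\<^sup>2)"
    using assms(2) by (intro member_le_sum) auto
  then show ?thesis using assms(1) by (simp add: power_le_one_iff abs_le_iff)
qed

lemma sum_sq_ge_if_close_to_unit:
  fixes M :: nat
  assumes x: "(\<Sum>k<M. (cmod (x k))\<^sup>2) = 1" and d: "\<And>k. k < M \<Longrightarrow> cmod (x k - y k) < 2 * h" and h: "h > 0"
  shows "(\<Sum>k<M. (cmod (y k))\<^sup>2) \<ge> 1 - 4 * h * M"
proof -
  have "(cmod (y k))\<^sup>2 \<ge> (cmod (x k))\<^sup>2 - 4 * h" if k: "k < M" for k
  proof (cases "cmod (x k) \<ge> 2 * h")
    case True
    have "cmod (x k) \<le> cmod (y k) + cmod (x k - y k)"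
      using norm_triangle_ineq[of "y k" "x k - y k"] by simp
    then have "cmod (x k) - 2 * h \<le> cmod (y k)" using d[OF k] by linarith
    then have "(cmod (x k) - 2 * h)\<^sup>2 \<le> (cmod (y k))\<^sup>2" using True by (intro power_mono) auto
    moreover have "(cmod (x k) - 2 * h)\<^sup>2 = (cmod (x k))\<^sup>2 - 4 * h * cmod (x k) + 4 * h\<^sup>2"
      by (simp add: power2_eq_square algebra_simps)
    moreover have "4 * h * cmod (x k) \<le> 4 * h"
      using norm_le_1_if_sum_sq_eq_1[OF x k] h by simp
    ultimately show ?thesis by (smt (verit) zero_le_power2)
  next
    case False
    then have "(cmod (x k))\<^sup>2 \<le> 2 * h * 1"
      using norm_le_1_if_sum_sq_eq_1[OF x k] h unfolding power2_eq_square
      by (intro mult_mono) auto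
    then show ?thesis using h zero_le_power2[of "cmod (y k)"] by linarith
  qed
  then have "(\<Sum>k<M. (cmod (x k))\<^sup>2 - 4 * h) \<le> (\<Sum>k<M. (cmod (y k))\<^sup>2)"
    by (intro sum_mono) auto
  then show ?thesis using x by (simp add: sum_subtractf mult.commute mult.left_commute)
qed

lemma norm_cinner_diff_le:
  assumes d: "\<And>k. k < M \<Longrightarrow> cmod (x k - y k) \<le> d" and v: "\<And>k. k < M \<Longrightarrow> cmod (v k) \<le> T"
  shows "cmod (cinner M x v - cinner M y v) \<le> M * (d * T)"
proof -
  have "cmod (cinner M x v - cinner M y v) = cmod (\<Sum>k<M. (x k - y k) * cnj (v k))"
    unfolding cinner_def by (simp add: sum_subtractf algebra_simps)
  also have "\<dots> \<le> (\<Sum>k<M. cmod (x k - y k) * cmod (v k))"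
    by (rule norm_sum[THEN order_trans]) (simp add: norm_mult)
  also have "\<dots> \<le> (\<Sum>k<M. d * T)"
    using d v by (intro sum_mono mult_mono) (auto intro: order_trans[OF norm_ge_zero])
  finally show ?thesis by simp
qed

lemma small_columns_subset_bad_columns:
  assumes d: "\<And>k. k < M \<Longrightarrow> cmod (x k - y k) < 2 * h" and hT: "M * (2 * h * T) \<le> sqrt (\<delta> / M)"
  shows "{i. i < n \<and> (cmod (cinner M x (col \<Phi> i)))\<^sup>2 < \<delta> / M}
           \<subseteq> {i. i < n \<and> bad_column M y T (2 * sqrt (\<delta> / M)) \<Phi> i}"
proof safe
  fix i assume i: "i < n" and small: "(cmod (cinner M x (col \<Phi> i)))\<^sup>2 < \<delta> / M"
  show "bad_column M y T (2 * sqrt (\<delta> / M)) \<Phi> i"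
  proof (cases "\<exists>k<M. cmod (\<Phi> (k, i)) \<ge> T")
    case True
    then show ?thesis unfolding bad_column_def by blast
  next
    case False
    then have "cmod (col \<Phi> i k) \<le> T" if "k < M" for k
      using that by (auto simp: col_def not_le)
    then have "cmod (cinner M x (col \<Phi> i) - cinner M y (col \<Phi> i)) \<le> sqrt (\<delta> / M)"
      using norm_cinner_diff_le[of M x y "2 * h" "col \<Phi> i" T] d hT by (force intro: less_imp_le)
    moreover have "cmod (cinner M x (col \<Phi> i)) < sqrt (\<delta> / M)"
      using small real_sqrt_less_mono by fastforce
    moreover have "cmod (cinner M y (col \<Phi> i))
        \<le> cmod (cinner M x (col \<Phi> i)) + cmod (cinner M x (col \<Phi> i) - cinner M y (col \<Phi> i))"
      using norm_triangle_ineq4[of "cinner M x (col \<Phi> i)" "cinner M x (col \<Phi> i) - cinner M y (col \<Phi> i)"]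
      by simp
    ultimately show ?thesis unfolding bad_column_def by simp
  qed
qed

section \<open>Union bound over the net\<close>

lemma bad_column_prob_le:
  fixes M :: nat
  assumes M: "M \<ge> 1" and \<delta>: "\<delta> \<ge> 0" and T: "T > 0"
  shows "2 * (2 * sqrt (\<delta> / M)) / (sqrt ((1 / M) / 2) * sqrt (1 / 4) * sqrt (2 * pi)) + M * (4 * (1 / M) / T\<^sup>2)
         \<le> 8 * sqrt \<delta> + 4 / T\<^sup>2"
proof -
  have "sqrt (real M) > 0" using M by simp
  then have "2 * (2 * sqrt (\<delta> / M)) / (sqrt ((1 / M) / 2) * sqrt (1 / 4) * sqrt (2 * pi)) = 8 * sqrt \<delta> / sqrt pi"
    by (simp add: real_sqrt_divide real_sqrt_mult field_simps)
  also have "\<dots> \<le> 8 * sqrt \<delta>"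
    using \<delta> pi_gt3 by (intro divide_left_mono[of 1 "sqrt pi", simplified]) auto
  finally show ?thesis using M by simp
qed

lemma few_small_columns_if_net_has_few_bad_columns:
  fixes M n K :: nat and h T \<delta> :: real
  assumes h: "h > 0" "4 * h * M \<le> 3 / 4" "M * (2 * h * T) \<le> sqrt (\<delta> / M)"
    and x: "(\<Sum>k<M. (cmod (x k))\<^sup>2) = 1"
    and few_bad: "\<And>y. y \<in> net M h \<Longrightarrow> (\<Sum>k<M. (cmod (y k))\<^sup>2) \<ge> 1 / 4 \<Longrightarrow>
                   card {i. i < n \<and> bad_column M y T (2 * sqrt (\<delta> / M)) \<Phi> i} < K"
  shows "card {i. i < n \<and> (cmod (cinner M x (col \<Phi> i)))\<^sup>2 < \<delta> / M} < K"
proof -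
  obtain y where y: "y \<in> net M h" "\<forall>k<M. cmod (x k - y k) < 2 * h"
    using net_approx[OF h(1), of M x] norm_le_1_if_sum_sq_eq_1[OF x] by blast
  have "(\<Sum>k<M. (cmod (y k))\<^sup>2) \<ge> 1 - 4 * h * M"
    by (rule sum_sq_ge_if_close_to_unit[OF x _ h(1)]) (use y in auto)
  then have "card {i. i < n \<and> bad_column M y T (2 * sqrt (\<delta> / M)) \<Phi> i} < K"
    using few_bad y h(2) by auto
  moreover have "{i. i < n \<and> (cmod (cinner M x (col \<Phi> i)))\<^sup>2 < \<delta> / M}
      \<subseteq> {i. i < n \<and> bad_column M y T (2 * sqrt (\<delta> / M)) \<Phi> i}"
    by (rule small_columns_subset_bad_columns) (use y h in auto)
  then have "card {i. i < n \<and> (cmod (cinner M x (col \<Phi> i)))\<^sup>2 < \<delta> / M}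
      \<le> card {i. i < n \<and> bad_column M y T (2 * sqrt (\<delta> / M)) \<Phi> i}"
    by (intro card_mono) auto
  ultimately show ?thesis by linarith
qed

lemma few_small_columns_whp:
  fixes M n K m :: nat and \<delta> T h :: real
  assumes M: "M \<ge> 1" and n: "n \<ge> 1" and \<delta>: "\<delta> > 0" and T: "T > 0"
    and h: "h > 0" "4 * h * M \<le> 3 / 4" "M * (2 * h * T) \<le> sqrt (\<delta> / M)"
    and K: "K \<ge> 1" "K + M \<le> m + 1"
  shows "\<exists>A\<in>sets (gauss_matrix M n).
     measure (gauss_matrix M n) A \<ge> 1 - card (net M h) * (2 ^ n * (8 * sqrt \<delta> + 4 / T\<^sup>2) ^ K) \<and>
     (\<forall>\<Phi>\<in>A. \<forall>x. (\<Sum>k<M. (cmod (x k))\<^sup>2) = 1 \<longrightarrow>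
        card {i. i < n \<and> (cmod (cinner M x (col \<Phi> i)))\<^sup>2 < \<delta> / M} + M \<le> m)"
proof -
  define s :: real where "s = 1 / M"
  define I where "I = {..<M} \<times> {..<n}"
  define u where "u = 2 * sqrt (\<delta> / M)"
  define r where "r = 2 * u / (sqrt (s / 2) * sqrt (1 / 4) * sqrt (2 * pi)) + M * (4 * s / T\<^sup>2)"
  interpret iid_CN s I by unfold_locales (use M in \<open>auto simp: s_def I_def\<close>)
  have \<Omega>: "gauss_matrix M n = \<Omega>" by (simp add: gauss_matrix_def s_def I_def)
  define N where "N = {y\<in>net M h. (\<Sum>k<M. (cmod (y k))\<^sup>2) \<ge> 1 / 4}"
  define bad where "bad y = {\<omega>\<in>space \<Omega>. K \<le> card {i. i < n \<and> bad_column M y T u \<omega> i}}" for y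
  define A where "A = space \<Omega> - (\<Union>y\<in>N. bad y)"
  have N: "finite N" "card N \<le> card (net M h)"
    unfolding N_def using finite_net by (auto intro: card_mono)
  have bad: "bad y \<in> events" for y
    unfolding bad_def by (rule sets_many_bad_columns[OF I_def])
  have r: "0 \<le> r" "r \<le> 8 * sqrt \<delta> + 4 / T\<^sup>2"
    unfolding r_def u_def s_def using bad_column_prob_le[OF M _ T, of \<delta>] \<delta> T
    by (auto intro!: add_nonneg_nonneg)
  have "prob (\<Union>y\<in>N. bad y) \<le> (\<Sum>y\<in>N. prob (bad y))"
    using N bad by (intro measure_UNION_le) auto
  also have "\<dots> \<le> (\<Sum>y\<in>N. 2 ^ n * r ^ K)"
    unfolding bad_def r_def u_def N_def using M n \<delta> T K(1)
    by (intro sum_mono prob_many_bad_columns[OF I_def]) auto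
  also have "\<dots> \<le> card (net M h) * (2 ^ n * (8 * sqrt \<delta> + 4 / T\<^sup>2) ^ K)"
    using N r by (simp add: mult_mono power_mono)
  finally have "measure \<Omega> A \<ge> 1 - card (net M h) * (2 ^ n * (8 * sqrt \<delta> + 4 / T\<^sup>2) ^ K)"
    unfolding A_def using prob_compl[of "\<Union>y\<in>N. bad y"] N bad by (simp add: sets.finite_UN)
  moreover have "card {i. i < n \<and> (cmod (cinner M x (col \<Phi> i)))\<^sup>2 < \<delta> / M} < K"
    if "\<Phi> \<in> A" and x: "(\<Sum>k<M. (cmod (x k))\<^sup>2) = 1" for \<Phi> x
    using h x by (rule few_small_columns_if_net_has_few_bad_columns)
      (use that in \<open>auto simp: A_def bad_def N_def u_def\<close>)
  moreover have "A \<in> events"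
    unfolding A_def using N bad by auto
  ultimately show ?thesis
    unfolding \<Omega> using K(2) by (intro bexI[of _ A] conjI ballI allI impI) fastforce+
qed

lemma max_noise_scaled_ge:
  fixes M :: nat and P :: ereal
  assumes M: "M \<ge> 1" and P: "\<nu> < a / sqrt M \<Longrightarrow> P \<ge> ereal (a / M)"
  shows "max (ereal \<nu>) (ereal (sqrt M) * P) \<ge> ereal (a / sqrt M)"
proof (cases "\<nu> < a / sqrt M")
  case True
  have "sqrt M > 0" using M by simp
  have "sqrt M * (a / M) = sqrt M * (a / (sqrt M * sqrt M))" by simp
  also have "\<dots> = a / sqrt M" using \<open>sqrt M > 0\<close> by (simp add: field_simps)
  finally have "ereal (a / sqrt M) \<le> ereal (sqrt M) * P"
    using ereal_mult_left_mono[OF P[OF True], of "ereal (sqrt M)"] by simp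
  then show ?thesis by (simp add: le_max_iff_disj)
qed (simp add: le_max_iff_disj)

section \<open>Choice of constants and the main theorem\<close>

(* r0 bounds the probability that a column is bad for a fixed net point; it is chosen so that
   2^n r0^(eta n) = exp(-(10/C) n) <= M^(-5M), which beats the net size (c M^2)^(2M). *)
locale pun_constants =
  fixes C \<alpha> :: real
  assumes C: "C > 0" and \<alpha>: "0 < \<alpha>" "\<alpha> < 1"
begin

definition \<eta> :: real where "\<eta> = (1 - \<alpha>) / 4"
definition r0 :: real where "r0 = exp (- (10 / C + 1) / \<eta>)"
definition \<delta> :: real where "\<delta> = (r0 / 16)\<^sup>2"
definition T :: real where "T = sqrt (8 / r0)"
definition c :: real where "c = 4 * T / sqrt \<delta> + 5"
definition ln_threshold :: real where "ln_threshold = max (2 * ln c + 1) (8 / ((1 - \<alpha>) * C))"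

lemma \<eta>_pos: "\<eta> > 0"
  using \<alpha> by (simp add: \<eta>_def)

lemma r0_pos: "r0 > 0" and r0_le_1: "r0 \<le> 1"
proof -
  have "0 \<le> 10 / C" using C by simp
  then have "- (10 / C + 1) \<le> 0" by linarith
  then have "- (10 / C + 1) / \<eta> \<le> 0" using \<eta>_pos by (rule divide_nonpos_pos)
  then show "r0 > 0" "r0 \<le> 1" by (simp_all add: r0_def)
qed

lemma \<delta>_pos: "\<delta> > 0" and sqrt_\<delta>: "sqrt \<delta> = r0 / 16"
  using r0_pos by (auto simp: \<delta>_def)

lemma T_ge_1: "T \<ge> 1"
  using r0_pos r0_le_1 by (simp add: T_def field_simps)

lemma c_ge_1: "c \<ge> 1"
  using T_ge_1 \<delta>_pos by (simp add: c_def)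

lemma bad_column_bound_eq_r0: "8 * sqrt \<delta> + 4 / T\<^sup>2 = r0"
  using r0_pos by (simp add: sqrt_\<delta> T_def field_simps)

definition mesh :: "nat \<Rightarrow> real" where "mesh M = sqrt \<delta> / (2 * T * (real M)\<^sup>2)"

lemma mesh_pos: "M \<ge> 1 \<Longrightarrow> mesh M > 0"
  using \<delta>_pos T_ge_1 by (simp add: mesh_def)

lemma mesh_le: "M \<ge> 1 \<Longrightarrow> 4 * mesh M * M \<le> 3 / 4"
proof -
  assume M: "M \<ge> 1"
  have "4 * mesh M * M = 2 * sqrt \<delta> / (T * M)"
    using M by (simp add: mesh_def power2_eq_square field_simps)
  also have "\<dots> \<le> 2 * sqrt \<delta>"
    using M T_ge_1 \<delta>_pos mult_mono[of 1 T 1 "real M"] by (intro divide_left_mono[of 1 "T * M", simplified]) auto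
  also have "\<dots> \<le> 3 / 4" using sqrt_\<delta> r0_le_1 by simp
  finally show ?thesis .
qed

lemma mesh_times_T_le: "M \<ge> 1 \<Longrightarrow> M * (2 * mesh M * T) \<le> sqrt (\<delta> / M)"
proof -
  assume M: "M \<ge> 1"
  have "M * (2 * mesh M * T) = sqrt \<delta> / M"
    using M T_ge_1 by (simp add: mesh_def power2_eq_square field_simps)
  also have "\<dots> \<le> sqrt \<delta> / sqrt M"
    using M \<delta>_pos by (intro divide_left_mono) (auto simp: real_sqrt_le_iff' power2_eq_square le_square)
  finally show ?thesis by (simp add: real_sqrt_divide)
qed

lemma card_net_mesh_le: "M \<ge> 1 \<Longrightarrow> real (card (net M (mesh M))) \<le> (c * (real M)\<^sup>2) ^ (2 * M)"
proof -
  assume M: "M \<ge> 1"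
  have "0 < 1 / mesh M" using mesh_pos[OF M] by simp
  then have "0 \<le> \<lceil>1 / mesh M\<rceil>" by (subst zero_le_ceiling) linarith
  then have radius: "0 \<le> 2 * grid_radius (mesh M) + 1"
    unfolding grid_radius_def by simp
  have "real_of_int (2 * grid_radius (mesh M) + 1) \<le> 4 * T * (real M)\<^sup>2 / sqrt \<delta> + 5"
    unfolding grid_radius_def mesh_def by simp linarith
  also have "\<dots> \<le> c * (real M)\<^sup>2"
    using M unfolding c_def by (simp add: distrib_right one_le_power)
  finally have "real_of_int (2 * grid_radius (mesh M) + 1) ^ (2 * M) \<le> (c * (real M)\<^sup>2) ^ (2 * M)"
    using radius by (intro power_mono) auto
  moreover have "real (card (net M (mesh M))) \<le> real_of_int (2 * grid_radius (mesh M) + 1) ^ (2 * M)"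
    using card_net_le[of M "mesh M"] radius by (metis of_int_of_nat_eq of_nat_le_iff of_nat_power int_nat_eq)
  ultimately show ?thesis by linarith
qed

lemma net_union_bound_le_exp:
  assumes M: "M \<ge> 1" and n: "real n \<ge> C / 2 * M * ln M" and lnM: "ln M \<ge> 2 * ln c + 1"
    and K: "real K \<ge> \<eta> * n"
  shows "real (card (net M (mesh M))) * (2 ^ n * r0 ^ K) \<le> exp (- real M)"
proof -
  have "r0 ^ K = exp (K * ln r0)"
    using r0_pos by (simp add: exp_of_nat_mult)
  also have "\<dots> \<le> exp (\<eta> * n * ln r0)"
    using K r0_pos r0_le_1 by (intro exp_mono mult_right_mono_neg) auto
  also have "\<eta> * n * ln r0 = - (10 / C + 1) * n"
    using \<eta>_pos by (simp add: r0_def)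
  finally have r0K: "r0 ^ K \<le> exp (- (10 / C + 1) * n)" .
  have "(2::real) ^ n = exp (n * ln 2)"
    by (simp add: exp_of_nat_mult)
  also have "\<dots> \<le> exp n"
    using ln_2_less_1 by (simp add: mult_left_le)
  finally have "2 ^ n * r0 ^ K \<le> exp n * exp (- (10 / C + 1) * n)"
    using r0K r0_pos by (intro mult_mono) auto
  also have "\<dots> = exp (- (10 / C) * n)"
    by (simp flip: exp_add) (simp add: algebra_simps)
  also have "\<dots> \<le> exp (- 5 * real M * ln M)"
  proof -
    have "10 / C * (C / 2 * M * ln M) \<le> 10 / C * n"
      using n C by (intro mult_left_mono) auto
    then show ?thesis using C by simp
  qed
  finally have P: "2 ^ n * r0 ^ K \<le> exp (- 5 * real M * ln M)" .
  have cM: "c * (real M)\<^sup>2 > 0" using c_ge_1 M by simp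
  have "real (card (net M (mesh M))) \<le> (c * (real M)\<^sup>2) ^ (2 * M)"
    by (rule card_net_mesh_le[OF M])
  also have "\<dots> = exp (ln (c * (real M)\<^sup>2)) ^ (2 * M)"
    using cM by simp
  also have "\<dots> = exp (2 * M * (ln c + 2 * ln M))"
    using c_ge_1 M by (simp add: exp_of_nat_mult[symmetric] ln_mult ln_realpow)
  finally have "real (card (net M (mesh M))) * (2 ^ n * r0 ^ K)
      \<le> exp (2 * M * (ln c + 2 * ln M)) * exp (- 5 * real M * ln M)"
    using P r0_pos by (intro mult_mono) auto
  also have "\<dots> = exp (- real M * (ln M - 2 * ln c))"
    by (simp flip: exp_add) (simp add: algebra_simps)
  also have "\<dots> \<le> exp (- real M)"
    using lnM M by simp
  finally show ?thesis .
qed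

lemma few_small_columns_whp_large_M:
  assumes M: "M \<ge> 1" and lnM: "ln M \<ge> ln_threshold" and n: "real n \<ge> C / 2 * M * ln M"
  shows "\<exists>A\<in>sets (gauss_matrix M n). measure (gauss_matrix M n) A \<ge> 1 - exp (- real M) \<and>
     (\<forall>\<Phi>\<in>A. \<forall>x. (\<Sum>k<M. (cmod (x k))\<^sup>2) = 1 \<longrightarrow>
        card {i. i < n \<and> (cmod (cinner M x (col \<Phi> i)))\<^sup>2 < \<delta> / M} + M \<le> nat \<lfloor>(1 - \<alpha>) * n\<rfloor>)"
proof -
  have "C / 2 * M * (8 / ((1 - \<alpha>) * C)) \<le> C / 2 * M * ln M"
    using lnM C by (intro mult_left_mono) (auto simp: ln_threshold_def)
  moreover have "C / 2 * M * (8 / ((1 - \<alpha>) * C)) = 4 * M / (1 - \<alpha>)"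
    using C \<alpha> by (simp add: field_simps)
  ultimately have "4 * M / (1 - \<alpha>) \<le> n"
    using n by linarith
  then have n_large: "4 * M \<le> (1 - \<alpha>) * n"
    using \<alpha> by (simp add: pos_divide_le_eq mult.commute)
  then have n1: "n \<ge> 1"
    using M \<alpha> by (cases n) auto
  define K where "K = nat \<lceil>\<eta> * n\<rceil>"
  have "real K = of_int \<lceil>\<eta> * n\<rceil>"
    unfolding K_def using \<eta>_pos by (simp add: add_pos_nonneg)
  then have K: "real K \<ge> \<eta> * n" "real K < \<eta> * n + 1"
    by linarith+
  moreover have "\<eta> * n > 0"
    using \<eta>_pos n1 by simp
  ultimately have K1: "K \<ge> 1"
    by linarith
  have "\<eta> * n = (1 - \<alpha>) * n / 4"
    by (simp add: \<eta>_def)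
  then have "real K + M < (1 - \<alpha>) * n / 4 + 1 + (1 - \<alpha>) * n / 4"
    using K(2) n_large by linarith
  then have K2: "K + M \<le> nat \<lfloor>(1 - \<alpha>) * n\<rfloor> + 1"
    using n_large M by linarith
  obtain A where A: "A \<in> sets (gauss_matrix M n)"
    "measure (gauss_matrix M n) A \<ge> 1 - card (net M (mesh M)) * (2 ^ n * (8 * sqrt \<delta> + 4 / T\<^sup>2) ^ K)"
    "\<forall>\<Phi>\<in>A. \<forall>x. (\<Sum>k<M. (cmod (x k))\<^sup>2) = 1 \<longrightarrow>
        card {i. i < n \<and> (cmod (cinner M x (col \<Phi> i)))\<^sup>2 < \<delta> / M} + M \<le> nat \<lfloor>(1 - \<alpha>) * n\<rfloor>"
    using few_small_columns_whp[OF M n1 \<delta>_pos _ mesh_pos[OF M] mesh_le[OF M] mesh_times_T_le[OF M] K1 K2]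
      T_ge_1 by fastforce
  moreover have "card (net M (mesh M)) * (2 ^ n * (8 * sqrt \<delta> + 4 / T\<^sup>2) ^ K) \<le> exp (- real M)"
    unfolding bad_column_bound_eq_r0 using lnM by (intro net_union_bound_le_exp M n K(1)) (simp add: ln_threshold_def)
  ultimately show ?thesis by force
qed

lemma noise_or_PUN_large_whp:
  assumes M: "M \<ge> 1" and lnM: "ln M \<ge> ln_threshold" and n: "real n \<ge> C / 2 * M * ln M"
    and E: "E \<subseteq> {e. e \<subseteq> {..<n} \<and> card e = 2}"
  shows "\<exists>A\<in>sets (gauss_matrix M n). measure (gauss_matrix M n) A \<ge> 1 - exp (- real M) \<and>
     (\<forall>\<Phi>\<in>A. \<forall>\<epsilon>. max (ereal (noise_norm E \<epsilon>)) (ereal (sqrt M) * PUN M n E \<Phi> \<alpha> \<epsilon>)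
                     \<ge> ereal ((\<delta> / 2) / sqrt M))"
proof -
  obtain A where A: "A \<in> sets (gauss_matrix M n)" "measure (gauss_matrix M n) A \<ge> 1 - exp (- real M)"
    "\<forall>\<Phi>\<in>A. \<forall>x. (\<Sum>k<M. (cmod (x k))\<^sup>2) = 1 \<longrightarrow>
       card {i. i < n \<and> (cmod (cinner M x (col \<Phi> i)))\<^sup>2 < \<delta> / M} + M \<le> nat \<lfloor>(1 - \<alpha>) * n\<rfloor>"
    using few_small_columns_whp_large_M[OF M lnM n] by blast
  have "max (ereal (noise_norm E \<epsilon>)) (ereal (sqrt M) * PUN M n E \<Phi> \<alpha> \<epsilon>) \<ge> ereal ((\<delta> / 2) / sqrt M)"
    if "\<Phi> \<in> A" for \<Phi> \<epsilon>
  proof (rule max_noise_scaled_ge[OF M])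
    assume "noise_norm E \<epsilon> < \<delta> / 2 / sqrt M"
    from PUN_ge_if_few_small_columns[OF M \<delta>_pos E this]
    show "PUN M n E \<Phi> \<alpha> \<epsilon> \<ge> ereal (\<delta> / 2 / M)"
      using A(3) that by blast
  qed
  with A(1,2) show ?thesis by blast
qed

end

lemma eventually_ge_half_and_ln_ge:
  fixes n :: "nat \<Rightarrow> nat"
  assumes asy: "(\<lambda>M. real (n M)) \<sim>[at_top] (\<lambda>M. C * real M * ln (real M))" and C: "C > 0"
  shows "\<exists>M0. \<forall>M\<ge>M0. real (n M) \<ge> C / 2 * M * ln M \<and> ln M \<ge> L"
proof -
  have "eventually (\<lambda>M. norm (real (n M)) \<ge> 1 / 2 * norm (C * real M * ln (real M))) at_top"
    by (rule asymp_equiv_imp_eventually_ge[OF asy]) simp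
  moreover have "filterlim (\<lambda>M::nat. ln (real M)) at_top at_top"
    by (rule filterlim_compose[OF ln_at_top filterlim_real_sequentially])
  then have "eventually (\<lambda>M::nat. max L 0 \<le> ln (real M)) at_top"
    unfolding filterlim_at_top by blast
  ultimately have "eventually (\<lambda>M. real (n M) \<ge> C / 2 * M * ln M \<and> ln M \<ge> L) at_top"
  proof eventually_elim
    case (elim M)
    then have "norm (C * real M * ln (real M)) = C * M * ln M"
      using C by (simp add: abs_mult)
    then show ?case using elim by simp
  qed
  then show ?thesis unfolding eventually_at_top_linorder by blast
qed

theorem theorem6p8:
  fixes C \<alpha> :: real and n :: "nat \<Rightarrow> nat" and E :: "nat \<Rightarrow> nat set set"
  assumes "C > 0"
    and "\<forall>M. E M \<subseteq> {e. e \<subseteq> {..<n M} \<and> card e = 2}"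
    and "(\<lambda>M. real (n M)) \<sim>[at_top] (\<lambda>M. C * real M * ln (real M))"
    and "0 < \<alpha>" and "\<alpha> < 1" and "\<alpha> < 1 - 1 / (2 * C)"
  shows "\<exists>C'>0. \<exists>c0>0. \<exists>c1>0. \<forall>M\<ge>1.
           \<exists>A \<in> sets (gauss_matrix M (n M)).
             measure (gauss_matrix M (n M)) A \<ge> 1 - c0 * exp (- c1 * real M) \<and>
             (\<forall>\<Phi>\<in>A. \<forall>\<epsilon>. max (ereal (noise_norm (E M) \<epsilon>))
                                  (ereal (sqrt (real M)) * PUN M (n M) (E M) \<Phi> \<alpha> \<epsilon>)
                              \<ge> ereal (C' / sqrt (real M)))"
proof -
  interpret pun_constants C \<alpha> using assms by unfold_locales auto
  obtain M0 where M0: "\<And>M. M \<ge> M0 \<Longrightarrow> real (n M) \<ge> C / 2 * M * ln M \<and> ln M \<ge> ln_threshold"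
    using eventually_ge_half_and_ln_ge[OF assms(3,1)] by blast
  have "\<exists>A \<in> sets (gauss_matrix M (n M)).
          measure (gauss_matrix M (n M)) A \<ge> 1 - exp M0 * exp (- 1 * real M) \<and>
          (\<forall>\<Phi>\<in>A. \<forall>\<epsilon>. max (ereal (noise_norm (E M) \<epsilon>)) (ereal (sqrt (real M)) * PUN M (n M) (E M) \<Phi> \<alpha> \<epsilon>)
                           \<ge> ereal ((\<delta> / 2) / sqrt (real M)))" if M: "M \<ge> 1" for M
  proof (cases "M \<ge> M0")
    case True
    have "exp (- real M) \<le> exp M0 * exp (- 1 * real M)" by simp
    with noise_or_PUN_large_whp[OF M _ _ assms(2)[rule_format]] M0[OF True] show ?thesis
      by (smt (verit, best))
  next
    case False
    then have "1 - exp M0 * exp (- 1 * real M) \<le> 0"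
      by (simp flip: exp_add)
    then show ?thesis by (intro bexI[of _ "{}"]) auto
  qed
  then show ?thesis
    using \<delta>_pos by (intro exI[of _ "\<delta> / 2"] exI[of _ "exp M0"] exI[of _ "1 :: real"] conjI allI impI) auto
qed

end
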